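(* For $(\alpha,\beta)\in\mathbb{R}^2$, let $\mathfrak{m}_{\alpha,\beta}$ be the $8$-dimensional real Lie algebra with a basis $\{v^1,\dots,v^8\}$ of its dual satisfying $$dv^1=dv^2=dv^3=0,\quad dv^4=v^{13},\quad dv^5=v^{23},\quad dv^6=v^{14}+v^{25}-v^{35},$$ $$dv^7=\alpha v^{12}+v^{15}+v^{24}+v^{34},\quad dv^8=v^{16}-2\beta v^{25}+v^{27}-\beta v^{35}-v^{45},$$ and let $\{v'^1,\dots,v'^8\}$ be the analogous basis of $\mathfrak{m}_{\alpha',\beta'}^*$. Let $f:\mathfrak{m}_{\alpha,\beta}\to\mathfrak{m}_{\alpha',\beta'}$ be a Lie algebra isomorphism and $F:\bigwedge^*\mathfrak{m}_{\alpha',\beta'}^*\to\bigwedge^*\mathfrak{m}_{\alpha,\beta}^*$ the extension of its dual, written $F(v'^i)=\sum_{j=1}^8\lambda^i_j v^j$, with $\Lambda=(\lambda^i_j)\in GL(8,\mathbb{R})$ and $F(dv'^i)=d(F(v'^i))$ for all $i$. Then $F(v'^i)\wedge v^i=0$ for $i=1,2,3$, and $$F(v'^4)\wedge v^{1234}=0,\quad F(v'^5)\wedge v^{1235}=0,\quad F(v'^6)\wedge v^{123456}=0,\quad F(v'^7)\wedge v^{123457}=0.$$ Therefore $\Lambda$ is lower triangular (i.e. $\lambda^i_j=0$ for $j>i$) and $\prod_{i=1}^8\lambda^i_i=\det\Lambda\neq0$.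
   Context: $v^{ij}=v^i\wedge v^j$, $v^{i_1\cdots i_k}=v^{i_1}\wedge\cdots\wedge v^{i_k}$, and $d$ is the Chevalley–Eilenberg differential. *)

theory Defs
  imports Complex_Main "HOL-Combinatorics.Permutations"
begin

text \<open>Exterior algebra of the dual of an 8-dimensional real vector space with
  basis v^1,...,v^8.  An element is represented by its coefficient function on
  index sets: the coefficient of S (a subset of {1..8}) is the coefficient of
  the basis element v^{s_1 ... s_k} with s_1 < ... < s_k.\<close>

type_synonym form = "nat set \<Rightarrow> real"

definition zero_form :: form where
  "zero_form = (\<lambda>_. 0)"

definition basis_form :: "nat set \<Rightarrow> form" where
  "basis_form S = (\<lambda>U. if U = S then 1 else 0)"

definition vv :: "nat \<Rightarrow> form" where
  "vv i = basis_form {i}"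

definition shuffle_sign :: "nat set \<Rightarrow> nat set \<Rightarrow> real" where
  "shuffle_sign S T = (-1) ^ card {(s, t). s \<in> S \<and> t \<in> T \<and> t < s}"

text \<open>Wedge product: v^S \<and> v^T = shuffle_sign S T v^(S \<union> T) if S, T disjoint, else 0.\<close>
definition wedge :: "form \<Rightarrow> form \<Rightarrow> form" where
  "wedge \<omega> \<eta> = (\<lambda>U. \<Sum>S\<in>Pow U. shuffle_sign S (U - S) * \<omega> S * \<eta> (U - S))"

fun wedge_list :: "form list \<Rightarrow> form" where
  "wedge_list [] = basis_form {}"
| "wedge_list (a # as) = wedge a (wedge_list as)"

definition vs :: "nat list \<Rightarrow> form" where
  "vs is = wedge_list (map vv is)"

definition dv :: "real \<Rightarrow> real \<Rightarrow> nat \<Rightarrow> form" where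
  "dv a b i =
    (if i = 4 then vs [1,3]
     else if i = 5 then vs [2,3]
     else if i = 6 then (\<lambda>U. vs [1,4] U + vs [2,5] U - vs [3,5] U)
     else if i = 7 then (\<lambda>U. a * vs [1,2] U + vs [1,5] U + vs [2,4] U + vs [3,4] U)
     else if i = 8 then (\<lambda>U. vs [1,6] U - 2 * b * vs [2,5] U + vs [2,7] U
                              - b * vs [3,5] U - vs [4,5] U)
     else zero_form)"

definition d1 :: "real \<Rightarrow> real \<Rightarrow> form \<Rightarrow> form" where
  "d1 a b \<omega> = (\<lambda>U. \<Sum>j=1..8. \<omega> {j} * dv a b j U)"

definition Frow :: "(nat \<Rightarrow> nat \<Rightarrow> real) \<Rightarrow> nat \<Rightarrow> form" where
  "Frow \<Lambda> i = (\<lambda>U. \<Sum>j=1..8. \<Lambda> i j * vv j U)"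

text \<open>Extension of F to the whole exterior algebra as algebra homomorphism:
  F(v'^{s_1...s_k}) = F(v'^{s_1}) \<and> ... \<and> F(v'^{s_k}).\<close>
definition Fext :: "(nat \<Rightarrow> nat \<Rightarrow> real) \<Rightarrow> form \<Rightarrow> form" where
  "Fext \<Lambda> \<omega> = (\<lambda>U. \<Sum>S\<in>Pow {1..8}.
      \<omega> S * wedge_list (map (Frow \<Lambda>) (sorted_list_of_set S)) U)"

definition det8 :: "(nat \<Rightarrow> nat \<Rightarrow> real) \<Rightarrow> real" where
  "det8 \<Lambda> = (\<Sum>p | p permutes {1..8}. of_int (sign p) * (\<Prod>i=1..8. \<Lambda> i (p i)))"

end

theory Submission
  imports Defs
begin

text \<open>Comparing the coefficients of v^{pq} on both sides of F(dv'^i) = d(F(v'^i)) gives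
  polynomial equations in the entries of \<Lambda>.  For i = 1,2,3 the left side vanishes, which
  kills the entries \<lambda>^i_j with j \<ge> 4; the equations for i = 4,5 then kill \<lambda>^4_j, \<lambda>^5_j for
  j \<ge> 6.  Whenever the rows known so far would be supported in too few columns, det \<Lambda>
  would vanish; this gives \<lambda>^3_1 = \<lambda>^3_2 = 0 and the non-vanishing of the diagonal entries
  reached along the way.  The decisive relation is the cubic
  \<lambda>^1_2 ((\<lambda>^1_2)^2 + 3 (\<lambda>^2_2)^2) = 0 obtained from the coefficient of v^{26} in the equation
  for i = 8, which forces \<lambda>^1_2 = 0; the remaining entries above the diagonal then vanish
  one after the other.\<close>

lemma atLeastAtMost_1_8: "{1..8::nat} = {1,2,3,4,5,6,7,8}"
  by auto

lemma sum_1_8: "(\<Sum>j=1..8::nat. f j) = f 1 + f 2 + f 3 + f 4 + f 5 + f 6 + f 7 + (f 8 :: real)"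
  by (simp add: eval_nat_numeral)

lemma det8_row_update_prod:
  assumes "k \<in> {1..8::nat}"
  shows "(\<Prod>i=1..8. (\<Lambda>(k := r)) i (p i)) = r (p k) * (\<Prod>i\<in>{1..8}-{k}. \<Lambda> i (p i))"
proof -
  have "(\<Prod>i=1..8. (\<Lambda>(k := r)) i (p i))
      = r (p k) * (\<Prod>i\<in>{1..8}-{k}. (\<Lambda>(k := r)) i (p i))"
    using assms by (simp add: prod.remove)
  also have "(\<Prod>i\<in>{1..8}-{k}. (\<Lambda>(k := r)) i (p i)) = (\<Prod>i\<in>{1..8}-{k}. \<Lambda> i (p i))"
    by (rule prod.cong) auto
  finally show ?thesis .
qed

lemma det8_row_linear:
  assumes "k \<in> {1..8::nat}"
  shows "det8 (\<Lambda>(k := (\<lambda>j. x j + t * y j))) = det8 (\<Lambda>(k := x)) + t * det8 (\<Lambda>(k := y))"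
  unfolding det8_def det8_row_update_prod[OF assms]
  by (simp add: algebra_simps sum.distrib sum_distrib_left)

lemma det8_eq_0_if_rows_eq:
  assumes k: "k \<in> {1..8::nat}" and l: "l \<in> {1..8}" and "k \<noteq> l" and eq: "\<Lambda> k = \<Lambda> l"
  shows "det8 \<Lambda> = 0"
proof -
  let ?S = "{p. p permutes {1..8::nat}}"
  let ?t = "transpose k l"
  have tp: "?t permutes {1..8}" using k l by (rule permutes_swap_id)
  define f where "f p = of_int (sign p) * (\<Prod>i=1..8. \<Lambda> i (p i))" for p :: "nat \<Rightarrow> nat"
  have f_swap: "f (p \<circ> ?t) = - f p" if "p permutes {1..8}" for p
  proof -
    have sign: "sign (p \<circ> ?t) = - sign p"
      using sign_compose[OF permutes_imp_permutation[OF _ that] permutes_imp_permutation[OF _ tp]]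
        \<open>k \<noteq> l\<close> by (simp add: sign_swap_id)
    have rows: "\<Lambda> (?t i) = \<Lambda> i" for i
      using eq by (cases "i = k"; cases "i = l") (auto simp: transpose_def)
    have "(\<Prod>i=1..8. \<Lambda> i ((p \<circ> ?t) i)) = (\<Prod>i=1..8. (\<lambda>i. \<Lambda> (?t i) (p i)) (?t i))"
      by (simp add: rows)
    also have "\<dots> = (\<Prod>i=1..8. \<Lambda> (?t i) (p i))"
      by (rule prod.reindex_bij_betw[OF permutes_imp_bij[OF tp]])
    also have "\<dots> = (\<Prod>i=1..8. \<Lambda> i (p i))" by (simp add: rows)
    finally show ?thesis unfolding f_def sign by simp
  qed
  have "det8 \<Lambda> = sum f ?S" unfolding det8_def f_def ..
  also have "\<dots> = sum (\<lambda>p. f (p \<circ> ?t)) ?S" by (rule sum_permutations_compose_right[OF tp])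
  also have "\<dots> = - sum f ?S" by (simp add: f_swap sum_negf)
  finally show ?thesis unfolding det8_def f_def by simp
qed

lemma det8_add_row_multiple:
  assumes k: "k \<in> {1..8::nat}" and l: "l \<in> {1..8}" and kl: "k \<noteq> l"
  shows "det8 (\<Lambda>(k := (\<lambda>j. \<Lambda> k j + t * \<Lambda> l j))) = det8 \<Lambda>"
  using det8_row_linear[OF k, of \<Lambda> "\<Lambda> k" t "\<Lambda> l"] det8_eq_0_if_rows_eq[OF k l kl, of "\<Lambda>(k := \<Lambda> l)"] kl
  by simp

lemma det8_eq_0_if_rows_supported:
  assumes R: "R \<subseteq> {1..8::nat}" and "finite C" and "card C < card R"
    and supp: "\<And>i j. i \<in> R \<Longrightarrow> j \<in> {1..8} \<Longrightarrow> j \<notin> C \<Longrightarrow> \<Lambda> i j = 0"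
  shows "det8 \<Lambda> = 0"
  unfolding det8_def
proof (rule sum.neutral, rule ballI)
  fix p assume "p \<in> {p. p permutes {1..8::nat}}"
  then have p: "p permutes {1..8}" by simp
  have "\<not> p ` R \<subseteq> C"
    using card_inj_on_le[OF permutes_inj_on[OF p] _ \<open>finite C\<close>] \<open>card C < card R\<close>
    by (meson leD)
  then obtain i where i: "i \<in> R" "p i \<notin> C" by blast
  with R have "i \<in> {1..8}" "p i \<in> {1..8}" using permutes_in_image[OF p, of i] by auto
  with i have "i \<in> {1..8}" "\<Lambda> i (p i) = 0" using supp by auto
  then show "of_int (sign p) * (\<Prod>i=1..8. \<Lambda> i (p i)) = 0" by auto
qed

lemma det8_lower_triangular:
  assumes lower: "\<And>i j. i \<in> {1..8::nat} \<Longrightarrow> j \<in> {1..8} \<Longrightarrow> i < j \<Longrightarrow> \<Lambda> i j = 0"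
  shows "det8 \<Lambda> = (\<Prod>i=1..8. \<Lambda> i i)"
proof -
  let ?S = "{p. p permutes {1..8::nat}}"
  define f where "f p = of_int (sign p) * (\<Prod>i=1..8. \<Lambda> i (p i))" for p :: "nat \<Rightarrow> nat"
  have "f p = 0" if "p \<in> ?S - {id}" for p
  proof -
    from that have p: "p permutes {1..8}" and "p \<noteq> id" by auto
    then obtain i where i: "i \<in> {1..8}" "i < p i"
      using permutes_natset_le[OF p] not_le by blast
    moreover have "p i \<in> {1..8}" using permutes_in_image[OF p, of i] i(1) by blast
    ultimately have "\<Lambda> i (p i) = 0" using lower by blast
    with i show ?thesis unfolding f_def by auto
  qed
  then have "sum f (?S - {id}) = 0" by (rule sum.neutral[OF ballI])
  moreover have "det8 \<Lambda> = f id + sum f (?S - {id})"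
    unfolding det8_def f_def by (rule sum.remove) (simp_all add: permutes_id finite_permutations)
  ultimately show ?thesis unfolding f_def by simp
qed

lemma shuffle_sign_ordered: "\<forall>s\<in>S. \<forall>t\<in>T. s < t \<Longrightarrow> shuffle_sign S T = 1"
proof -
  assume "\<forall>s\<in>S. \<forall>t\<in>T. s < t"
  then have no_inversions: "{(s, t). s \<in> S \<and> t \<in> T \<and> t < s} = {}" by fastforce
  show ?thesis unfolding shuffle_sign_def no_inversions by simp
qed

lemma shuffle_sign_transposition: "p < q \<Longrightarrow> shuffle_sign {q} {p} = -1"
proof -
  assume "p < q"
  then have inversions: "{(s, t). s \<in> {q} \<and> t \<in> {p} \<and> t < s} = {(q, p)}" by auto
  show ?thesis unfolding shuffle_sign_def inversions by simp
qed

lemma wedge_vv_basis_form: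
  assumes "finite T" and less: "\<forall>t\<in>T. a < t"
  shows "wedge (vv a) (basis_form T) = basis_form (insert a T)"
proof
  fix U
  show "wedge (vv a) (basis_form T) U = basis_form (insert a T) U"
  proof (cases "finite U")
    case False
    with \<open>finite T\<close> have "U \<noteq> insert a T" by auto
    with False show ?thesis by (simp add: wedge_def basis_form_def del: Pow_iff)
  next
    case True
    have sign: "shuffle_sign {a} T = 1" using less by (simp add: shuffle_sign_ordered)
    have "wedge (vv a) (basis_form T) U
        = (\<Sum>S\<in>Pow U. if S = {a} then shuffle_sign {a} (U - {a}) * (if U - {a} = T then 1 else 0) else 0)"
      unfolding wedge_def vv_def basis_form_def by (rule sum.cong) auto
    also have "\<dots> = (if a \<in> U then shuffle_sign {a} (U - {a}) * (if U - {a} = T then 1 else 0) else 0)"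
      using True by (simp add: sum.delta)
    also have "\<dots> = basis_form (insert a T) U"
      using less sign by (auto simp: basis_form_def)
    finally show ?thesis .
  qed
qed

lemma vs_eq_basis_form: "sorted_wrt (<) xs \<Longrightarrow> vs xs = basis_form (set xs)"
proof (induction xs)
  case Nil
  then show ?case by (simp add: vs_def)
next
  case (Cons a xs)
  then have "vs (a # xs) = wedge (vv a) (basis_form (set xs))" by (simp add: vs_def)
  also have "\<dots> = basis_form (set (a # xs))"
    using Cons.prems by (simp add: wedge_vv_basis_form)
  finally show ?case .
qed

lemma basis_form_doubleton_apply:
  assumes "(a::nat) < b" "p < q"
  shows "basis_form {a, b} {p, q} = (if a = p \<and> b = q then 1 else 0)"
  using assms by (auto simp: basis_form_def doubleton_eq_iff)

lemma Frow_singleton: "Frow \<Lambda> i {p} = (if p \<in> {1..8} then \<Lambda> i p else 0)"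
proof -
  have "Frow \<Lambda> i {p} = (\<Sum>j=1..8. if j = p then \<Lambda> i p else 0)"
    unfolding Frow_def vv_def basis_form_def by (rule sum.cong) auto
  then show ?thesis by simp
qed

lemma Frow_eq_0_if_not_singleton: "(\<forall>j. S \<noteq> {j}) \<Longrightarrow> Frow \<Lambda> i S = 0"
  unfolding Frow_def vv_def basis_form_def by simp

lemma wedge_basis_form_empty: "finite U \<Longrightarrow> wedge \<omega> (basis_form {}) U = \<omega> U"
proof -
  assume "finite U"
  have "wedge \<omega> (basis_form {}) U = (\<Sum>S\<in>Pow U. if S = U then shuffle_sign U {} * \<omega> U else 0)"
    unfolding wedge_def basis_form_def by (rule sum.cong) auto
  also have "\<dots> = \<omega> U" using \<open>finite U\<close> by (simp add: sum.delta shuffle_sign_def)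
  finally show ?thesis .
qed

lemma wedge_cong_finite:
  assumes "\<And>V. finite V \<Longrightarrow> \<eta> V = \<eta>' V" "finite U"
  shows "wedge \<omega> \<eta> U = wedge \<omega> \<eta>' U"
  unfolding wedge_def by (rule sum.cong) (use assms in \<open>auto intro: finite_subset\<close>)

lemma wedge_Frow_Frow_doubleton:
  assumes pq: "p < q" "p \<in> {1..8}" "q \<in> {1..8}"
  shows "wedge (Frow \<Lambda> a) (Frow \<Lambda> b) {p, q} = \<Lambda> a p * \<Lambda> b q - \<Lambda> a q * \<Lambda> b p"
proof -
  have sign_pq: "shuffle_sign {p} {q} = 1" and sign_qp: "shuffle_sign {q} {p} = -1"
    using pq by (simp_all add: shuffle_sign_ordered shuffle_sign_transposition)
  have diff: "{p, q} - {p} = {q}" "{p, q} - {q} = {p}" using pq by auto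
  let ?g = "\<lambda>S. shuffle_sign S ({p, q} - S) * Frow \<Lambda> a S * Frow \<Lambda> b ({p, q} - S)"
  have "wedge (Frow \<Lambda> a) (Frow \<Lambda> b) {p, q} = sum ?g (Pow {p, q})" unfolding wedge_def ..
  also have "\<dots> = sum ?g {{p}, {q}}"
  proof (rule sum.mono_neutral_right)
    show "\<forall>S\<in>Pow {p, q} - {{p}, {q}}. ?g S = 0"
    proof
      fix S assume "S \<in> Pow {p, q} - {{p}, {q}}"
      then have "\<forall>j. S \<noteq> {j}" by blast
      then show "?g S = 0" by (simp add: Frow_eq_0_if_not_singleton)
    qed
  qed auto
  also have "\<dots> = ?g {p} + ?g {q}" using pq by simp
  also have "\<dots> = \<Lambda> a p * \<Lambda> b q - \<Lambda> a q * \<Lambda> b p"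
    using pq diff sign_pq sign_qp by (simp add: Frow_singleton)
  finally show ?thesis .
qed

lemma Fext_add: "Fext \<Lambda> (\<lambda>U. f U + g U) = (\<lambda>U. Fext \<Lambda> f U + Fext \<Lambda> g U)"
  unfolding Fext_def by (simp add: algebra_simps sum.distrib)

lemma Fext_diff: "Fext \<Lambda> (\<lambda>U. f U - g U) = (\<lambda>U. Fext \<Lambda> f U - Fext \<Lambda> g U)"
  unfolding Fext_def by (simp add: algebra_simps sum_subtractf)

lemma Fext_scale: "Fext \<Lambda> (\<lambda>U. c * f U) = (\<lambda>U. c * Fext \<Lambda> f U)"
  unfolding Fext_def by (simp add: algebra_simps sum_distrib_left)

lemma Fext_zero: "Fext \<Lambda> (\<lambda>_. 0) = (\<lambda>_. 0)"
  unfolding Fext_def by simp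

lemma Fext_basis_form_doubleton:
  assumes ab: "a < b" "a \<in> {1..8}" "b \<in> {1..8}" and pq: "p < q" "p \<in> {1..8}" "q \<in> {1..8}"
  shows "Fext \<Lambda> (basis_form {a, b}) {p, q} = \<Lambda> a p * \<Lambda> b q - \<Lambda> a q * \<Lambda> b p"
proof -
  have "Fext \<Lambda> (basis_form {a, b}) {p, q}
      = (\<Sum>S\<in>Pow {1..8}. if S = {a, b} then wedge_list (map (Frow \<Lambda>) (sorted_list_of_set S)) {p, q} else 0)"
    unfolding Fext_def basis_form_def by (rule sum.cong) auto
  also have "\<dots> = wedge (Frow \<Lambda> a) (wedge (Frow \<Lambda> b) (basis_form {})) {p, q}"
    using ab by (simp add: sum.delta)
  also have "\<dots> = wedge (Frow \<Lambda> a) (Frow \<Lambda> b) {p, q}"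
    by (rule wedge_cong_finite) (auto simp: wedge_basis_form_empty)
  finally show ?thesis using wedge_Frow_Frow_doubleton[OF pq] by simp
qed

lemma wedge_Frow_basis_form_eq_zero:
  assumes supp: "\<And>j. j \<in> {1..8} \<Longrightarrow> j \<notin> T \<Longrightarrow> \<Lambda> i j = 0"
  shows "wedge (Frow \<Lambda> i) (basis_form T) = zero_form"
proof
  fix U
  have "shuffle_sign S (U - S) * Frow \<Lambda> i S * basis_form T (U - S) = 0" if "S \<subseteq> U" for S
  proof (cases "\<exists>j. S = {j} \<and> U - S = T")
    case True
    then obtain j where "S = {j}" "j \<notin> T" by blast
    then show ?thesis using supp by (simp add: Frow_singleton)
  next
    case False
    then show ?thesis by (auto simp: Frow_eq_0_if_not_singleton basis_form_def)
  qed
  then show "wedge (Frow \<Lambda> i) (basis_form T) U = zero_form U"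
    unfolding wedge_def zero_form_def by (simp add: sum.neutral)
qed

locale dual_iso_matrix =
  fixes \<alpha> \<beta> \<alpha>' \<beta>' :: real and \<Lambda> :: "nat \<Rightarrow> nat \<Rightarrow> real"
  assumes det_ne_0: "det8 \<Lambda> \<noteq> 0"
    and hom: "\<forall>i\<in>{1..8}. Fext \<Lambda> (dv \<alpha>' \<beta>' i) = d1 \<alpha> \<beta> (Frow \<Lambda> i)"
begin

lemma Fext_dv_doubleton:
  assumes "i \<in> {1..8}"
  shows "Fext \<Lambda> (dv \<alpha>' \<beta>' i) {p, q} = (\<Sum>j=1..8. \<Lambda> i j * dv \<alpha> \<beta> j {p, q})"
proof -
  have "Fext \<Lambda> (dv \<alpha>' \<beta>' i) {p, q} = d1 \<alpha> \<beta> (Frow \<Lambda> i) {p, q}" using hom assms by simp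
  also have "\<dots> = (\<Sum>j=1..8. \<Lambda> i j * dv \<alpha> \<beta> j {p, q})"
    unfolding d1_def by (rule sum.cong) (auto simp: Frow_singleton)
  finally show ?thesis .
qed

lemmas Fext_coefficient = Fext_dv_doubleton[unfolded sum_1_8]

lemmas coefficient_simps = dv_def zero_form_def vs_eq_basis_form basis_form_doubleton_apply
  Fext_add Fext_diff Fext_scale Fext_zero Fext_basis_form_doubleton

lemma rows_123_upper:
  assumes "i \<in> {1,2,3}" "j \<in> {4,5,6,7,8}"
  shows "\<Lambda> i j = 0"
proof -
  have "dv \<alpha>' \<beta>' i = zero_form" using assms(1) by (auto simp: dv_def)
  then have coeff: "(\<Sum>k=1..8. \<Lambda> i k * dv \<alpha> \<beta> k {p, q}) = 0" for p q
    using Fext_dv_doubleton[of i p q] assms(1) by (auto simp: zero_form_def Fext_zero)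
  have "\<Lambda> i 4 = 0" "\<Lambda> i 5 = 0" "\<Lambda> i 6 = 0" "\<Lambda> i 7 = 0" "\<Lambda> i 8 = 0"
    using coeff[of 1 3] coeff[of 2 3] coeff[of 1 4] coeff[of 1 5] coeff[of 1 6]
    unfolding sum_1_8 by (simp_all add: coefficient_simps)
  with assms(2) show ?thesis by auto
qed

lemma rows_45_upper:
  assumes "i \<in> {4,5}" "j \<in> {6,7,8}"
  shows "\<Lambda> i j = 0"
proof -
  have "\<Lambda> 4 6 = 0" "\<Lambda> 4 7 = 0" "\<Lambda> 4 8 = 0" "\<Lambda> 5 6 = 0" "\<Lambda> 5 7 = 0" "\<Lambda> 5 8 = 0"
    using Fext_coefficient[of 4 1 4] Fext_coefficient[of 4 1 5] Fext_coefficient[of 4 1 6]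
      Fext_coefficient[of 5 1 4] Fext_coefficient[of 5 1 5] Fext_coefficient[of 5 1 6]
    by (simp_all add: coefficient_simps rows_123_upper)
  with assms show ?thesis by auto
qed

lemma row_3_first_entries: "\<Lambda> 3 1 = 0" "\<Lambda> 3 2 = 0"
proof -
  have "\<Lambda> 3 1 = 0 \<and> \<Lambda> 3 2 = 0"
  proof (rule ccontr)
    assume nonzero: "\<not> (\<Lambda> 3 1 = 0 \<and> \<Lambda> 3 2 = 0)"
    have minor_1: "\<Lambda> 1 1 * \<Lambda> 3 2 = \<Lambda> 1 2 * \<Lambda> 3 1"
      using Fext_coefficient[of 4 1 2] by (simp add: coefficient_simps rows_45_upper)
    have minor_2: "\<Lambda> 2 1 * \<Lambda> 3 2 = \<Lambda> 2 2 * \<Lambda> 3 1"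
      using Fext_coefficient[of 5 1 2] by (simp add: coefficient_simps rows_45_upper)
    obtain s t where st: "\<Lambda> 1 1 = s * \<Lambda> 3 1" "\<Lambda> 1 2 = s * \<Lambda> 3 2"
        "\<Lambda> 2 1 = t * \<Lambda> 3 1" "\<Lambda> 2 2 = t * \<Lambda> 3 2"
    proof (cases "\<Lambda> 3 1 = 0")
      case True
      with nonzero minor_1 minor_2 show ?thesis
        by (intro that[of "\<Lambda> 1 2 / \<Lambda> 3 2" "\<Lambda> 2 2 / \<Lambda> 3 2"]) (auto simp: field_simps)
    next
      case False
      with minor_1 minor_2 show ?thesis
        by (intro that[of "\<Lambda> 1 1 / \<Lambda> 3 1" "\<Lambda> 2 1 / \<Lambda> 3 1"]) (auto simp: field_simps)
    qed
    define M1 where "M1 = \<Lambda>(1 := (\<lambda>j. \<Lambda> 1 j + (- s) * \<Lambda> 3 j))"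
    define M2 where "M2 = M1(2 := (\<lambda>j. M1 2 j + (- t) * M1 3 j))"
    have "det8 M1 = det8 \<Lambda>" unfolding M1_def by (rule det8_add_row_multiple) auto
    moreover have "det8 M2 = det8 M1" unfolding M2_def by (rule det8_add_row_multiple) auto
    moreover have "det8 M2 = 0"
      \<comment> \<open>the reduced rows 1 and 2 are both supported in column 3\<close>
      by (rule det8_eq_0_if_rows_supported[where R = "{1,2}" and C = "{3}", unfolded atLeastAtMost_1_8])
        (use st in \<open>auto simp: M2_def M1_def rows_123_upper\<close>)
    ultimately show False using det_ne_0 by simp
  qed
  then show "\<Lambda> 3 1 = 0" "\<Lambda> 3 2 = 0" by simp_all
qed

lemma diag_3_ne_0: "\<Lambda> 3 3 \<noteq> 0"
proof
  assume zero: "\<Lambda> 3 3 = 0"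
  have "det8 \<Lambda> = 0"
    by (rule det8_eq_0_if_rows_supported[where R = "{3}" and C = "{}", unfolded atLeastAtMost_1_8])
      (use zero row_3_first_entries in \<open>auto simp: rows_123_upper\<close>)
  with det_ne_0 show False ..
qed

lemma rows_45_first_entries:
  "\<Lambda> 4 4 = \<Lambda> 1 1 * \<Lambda> 3 3" "\<Lambda> 4 5 = \<Lambda> 1 2 * \<Lambda> 3 3"
  "\<Lambda> 5 4 = \<Lambda> 2 1 * \<Lambda> 3 3" "\<Lambda> 5 5 = \<Lambda> 2 2 * \<Lambda> 3 3"
  using Fext_coefficient[of 4 1 3] Fext_coefficient[of 4 2 3]
    Fext_coefficient[of 5 1 3] Fext_coefficient[of 5 2 3] row_3_first_entries
  by (simp_all add: coefficient_simps)

lemma rows_67_last_entry: "\<Lambda> 6 8 = 0" "\<Lambda> 7 8 = 0"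
  using Fext_coefficient[of 6 1 6] Fext_coefficient[of 7 1 6] row_3_first_entries
  by (simp_all add: coefficient_simps rows_123_upper rows_45_upper)

lemma entry_76:
  "\<Lambda> 7 6 = \<Lambda> 1 2 * \<Lambda> 5 5 + \<Lambda> 2 2 * \<Lambda> 4 5"
  "\<Lambda> 7 6 = \<Lambda> 1 1 * \<Lambda> 5 4 + \<Lambda> 2 1 * \<Lambda> 4 4"
  using Fext_coefficient[of 7 2 5] Fext_coefficient[of 7 1 4] row_3_first_entries rows_67_last_entry
  by (simp_all add: coefficient_simps rows_123_upper rows_45_upper algebra_simps)

lemma cubic_relation: "\<Lambda> 1 2 * (\<Lambda> 1 2 ^ 2 + 3 * \<Lambda> 2 2 ^ 2) = 0"
proof -
  have entry_66: "\<Lambda> 6 6 = \<Lambda> 1 2 * \<Lambda> 4 5 + \<Lambda> 2 2 * \<Lambda> 5 5"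
    using Fext_coefficient[of 6 2 5] row_3_first_entries rows_67_last_entry
    by (simp add: coefficient_simps rows_123_upper rows_45_upper algebra_simps)
  have "\<Lambda> 1 2 * \<Lambda> 6 6 + \<Lambda> 2 2 * \<Lambda> 7 6 = 0"
    using Fext_coefficient[of 8 2 6] row_3_first_entries
    by (simp add: coefficient_simps rows_123_upper rows_45_upper)
  then have "\<Lambda> 3 3 * (\<Lambda> 1 2 * (\<Lambda> 1 2 ^ 2 + 3 * \<Lambda> 2 2 ^ 2)) = 0"
    using entry_66 entry_76(1) rows_45_first_entries(2,4) by algebra
  with diag_3_ne_0 show ?thesis by simp
qed

lemma entry_12: "\<Lambda> 1 2 = 0"
proof (rule ccontr)
  assume "\<Lambda> 1 2 \<noteq> 0"
  then have "\<Lambda> 1 2 ^ 2 + 3 * \<Lambda> 2 2 ^ 2 > 0" by (simp add: add_pos_nonneg)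
  with cubic_relation \<open>\<Lambda> 1 2 \<noteq> 0\<close> show False by simp
qed

lemma diag_1_ne_0: "\<Lambda> 1 1 \<noteq> 0"
proof
  assume zero: "\<Lambda> 1 1 = 0"
  have "det8 \<Lambda> = 0"
    by (rule det8_eq_0_if_rows_supported[where R = "{1,3}" and C = "{3}", unfolded atLeastAtMost_1_8])
      (use zero entry_12 row_3_first_entries in \<open>auto simp: rows_123_upper\<close>)
  with det_ne_0 show False ..
qed

lemma diag_2_ne_0: "\<Lambda> 2 2 \<noteq> 0"
proof
  assume zero: "\<Lambda> 2 2 = 0"
  have "det8 \<Lambda> = 0"
    by (rule det8_eq_0_if_rows_supported[where R = "{1,2,3}" and C = "{1,3}", unfolded atLeastAtMost_1_8])
      (use zero entry_12 row_3_first_entries in \<open>auto simp: rows_123_upper\<close>)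
  with det_ne_0 show False ..
qed

lemma entry_21: "\<Lambda> 2 1 = 0"
proof -
  have "\<Lambda> 3 3 * (\<Lambda> 1 1 * \<Lambda> 2 1) = 0"
    using entry_76 entry_12 rows_45_first_entries by algebra
  with diag_3_ne_0 diag_1_ne_0 show ?thesis by simp
qed

lemma entries_45_54_76: "\<Lambda> 4 5 = 0" "\<Lambda> 5 4 = 0" "\<Lambda> 7 6 = 0"
  using rows_45_first_entries entry_76(1) entry_12 entry_21 by simp_all

lemma entry_67: "\<Lambda> 6 7 = 0"
  using Fext_coefficient[of 6 1 5] row_3_first_entries entries_45_54_76 entry_21
  by (simp add: coefficient_simps rows_123_upper)

lemma entry_13: "\<Lambda> 1 3 = 0"
proof -
  have "\<Lambda> 1 3 * \<Lambda> 4 4 = 0"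
    using Fext_coefficient[of 6 3 4] row_3_first_entries entries_45_54_76 entry_67
    by (simp add: coefficient_simps rows_123_upper)
  with rows_45_first_entries(1) diag_1_ne_0 diag_3_ne_0 show ?thesis by simp
qed

lemma entry_23: "\<Lambda> 2 3 = 0"
proof -
  have "\<Lambda> 2 3 * \<Lambda> 7 7 = 0"
    using Fext_coefficient[of 8 3 7] row_3_first_entries entry_13
    by (simp add: coefficient_simps rows_123_upper rows_45_upper)
  moreover have "\<Lambda> 7 7 = \<Lambda> 1 1 * \<Lambda> 5 5"
    using Fext_coefficient[of 7 1 5] row_3_first_entries entries_45_54_76 entry_21
    by (simp add: coefficient_simps rows_123_upper)
  ultimately show ?thesis
    using rows_45_first_entries(4) diag_1_ne_0 diag_2_ne_0 diag_3_ne_0 by simp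
qed

lemma lower_triangular: "i \<in> {1..8} \<Longrightarrow> j \<in> {1..8} \<Longrightarrow> i < j \<Longrightarrow> \<Lambda> i j = 0"
  unfolding atLeastAtMost_1_8
  using rows_67_last_entry entry_12 entry_13 entry_23 entries_45_54_76 entry_67
  by (auto simp: rows_123_upper rows_45_upper)

lemma zero_pattern:
  assumes "i \<in> {1..8}" "j \<in> {1..8}" "i < j \<or> (i, j) \<in> {(2,1), (3,1), (3,2), (5,4), (7,6)}"
  shows "\<Lambda> i j = 0"
  using assms lower_triangular entry_21 row_3_first_entries entries_45_54_76 by auto

lemma wedge_row_basis_form_eq_zero:
  assumes "i \<in> {1..8}"
    and "\<And>j. j \<in> {1..8} \<Longrightarrow> j \<notin> T \<Longrightarrow> i < j \<or> (i, j) \<in> {(2,1), (3,1), (3,2), (5,4), (7,6)}"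
  shows "wedge (Frow \<Lambda> i) (basis_form T) = zero_form"
  using assms by (intro wedge_Frow_basis_form_eq_zero zero_pattern) auto

lemma wedge_row_vs_eq_zero:
  assumes "sorted_wrt (<) xs" "i \<in> {1..8}"
    and "\<And>j. j \<in> {1..8} \<Longrightarrow> j \<notin> set xs \<Longrightarrow> i < j \<or> (i, j) \<in> {(2,1), (3,1), (3,2), (5,4), (7,6)}"
  shows "wedge (Frow \<Lambda> i) (vs xs) = zero_form"
  using wedge_row_basis_form_eq_zero[OF assms(2,3)] vs_eq_basis_form[OF assms(1)] by simp

end

theorem lemma3p5:
  fixes \<alpha> \<beta> \<alpha>' \<beta>' :: real and \<Lambda> :: "nat \<Rightarrow> nat \<Rightarrow> real"
  assumes GL: "det8 \<Lambda> \<noteq> 0"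
    and hom: "\<forall>i\<in>{1..8}. Fext \<Lambda> (dv \<alpha>' \<beta>' i) = d1 \<alpha> \<beta> (Frow \<Lambda> i)"
  shows "(\<forall>i\<in>{1,2,3}. wedge (Frow \<Lambda> i) (vv i) = zero_form)
    \<and> wedge (Frow \<Lambda> 4) (vs [1,2,3,4]) = zero_form
    \<and> wedge (Frow \<Lambda> 5) (vs [1,2,3,5]) = zero_form
    \<and> wedge (Frow \<Lambda> 6) (vs [1,2,3,4,5,6]) = zero_form
    \<and> wedge (Frow \<Lambda> 7) (vs [1,2,3,4,5,7]) = zero_form
    \<and> (\<forall>i\<in>{1..8}. \<forall>j\<in>{1..8}. i < j \<longrightarrow> \<Lambda> i j = 0)
    \<and> (\<Prod>i=1..8. \<Lambda> i i) = det8 \<Lambda>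
    \<and> det8 \<Lambda> \<noteq> 0"
proof -
  interpret dual_iso_matrix \<alpha> \<beta> \<alpha>' \<beta>' \<Lambda> using GL hom by unfold_locales
  have "\<forall>i\<in>{1,2,3}. wedge (Frow \<Lambda> i) (vv i) = zero_form"
    unfolding vv_def by (intro ballI wedge_row_basis_form_eq_zero) auto
  moreover have "wedge (Frow \<Lambda> 4) (vs [1,2,3,4]) = zero_form"
    by (rule wedge_row_vs_eq_zero) auto
  moreover have "wedge (Frow \<Lambda> 5) (vs [1,2,3,5]) = zero_form"
    by (rule wedge_row_vs_eq_zero) auto
  moreover have "wedge (Frow \<Lambda> 6) (vs [1,2,3,4,5,6]) = zero_form"
    by (rule wedge_row_vs_eq_zero) auto
  moreover have "wedge (Frow \<Lambda> 7) (vs [1,2,3,4,5,7]) = zero_form"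
    by (rule wedge_row_vs_eq_zero) auto
  moreover have "det8 \<Lambda> = (\<Prod>i=1..8. \<Lambda> i i)"
    by (rule det8_lower_triangular) (rule lower_triangular)
  ultimately show ?thesis using lower_triangular GL by simp
qed

end
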